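(* Let $p$ be a prime and $n\ge1$, and suppose $p^n-1=st$ with positive integers $s<t$ and $\gcd(s,t)=1$. Let $\alpha$ be a generator of $\mathbb{F}_{p^n}^\times$, $\beta=\alpha^t$, $\gamma=\alpha^s$. Let $S_1,S_2\subset\mathbb{Z}_s\times\mathbb{Z}_t$ be two disjoint linearly independent patterns, of sizes $m_1$ and $m_2$ respectively, and let $V_1,V_2\subset\mathbb{F}_{p^n}$ be the $\mathbb{F}_p$-spans of $A|_{S_1}$ and $A|_{S_2}$. Suppose $\dim_{\mathbb{F}_p}V_1+\dim_{\mathbb{F}_p}V_2\le n$. Then there exists $(a,b)\in\mathbb{Z}_s\times\mathbb{Z}_t$ such that $T_{a,b}(S_2)$ is disjoint from $S_1$ and the pattern $S_1\cup T_{a,b}(S_2)$ is linearly independent.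
   Context: $\mathbb{Z}_s=\mathbb{Z}/s\mathbb{Z}$, $\mathbb{Z}_t=\mathbb{Z}/t\mathbb{Z}$; $(i,j)\mapsto\beta^i\gamma^j$ is a well-defined bijection $\mathbb{Z}_s\times\mathbb{Z}_t\to\mathbb{F}_{p^n}^\times$. A pattern is a subset $S\subset\mathbb{Z}_s\times\mathbb{Z}_t$, and $A|_S=\{\beta^i\gamma^j:(i,j)\in S\}$. $S$ is a linearly independent pattern if the $|S|$ elements of $A|_S$ are linearly independent over $\mathbb{F}_p$. The toroidal translation $T_{a,b}:\mathbb{Z}_s\times\mathbb{Z}_t\to\mathbb{Z}_s\times\mathbb{Z}_t$ is $T_{a,b}(i,j)=(i+a \bmod s,\ j+b\bmod t)$. *)

theory Defs
  imports "HOL-Computational_Algebra.Primes"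
begin

text \<open>Linear algebra over the prime field F_p inside a field of characteristic p:
  the scalars of F_p are the elements of_nat c with c < p.\<close>

definition Fp_indep_set :: "nat \<Rightarrow> 'a::field set \<Rightarrow> bool" where
  "Fp_indep_set p X \<longleftrightarrow> finite X \<and>
     (\<forall>c :: 'a \<Rightarrow> nat. (\<forall>x\<in>X. c x < p) \<longrightarrow> (\<Sum>x\<in>X. of_nat (c x) * x) = 0 \<longrightarrow> (\<forall>x\<in>X. c x = 0))"

definition Fp_span :: "nat \<Rightarrow> 'a::field set \<Rightarrow> 'a set" where
  "Fp_span p X = {y. \<exists>c :: 'a \<Rightarrow> nat. (\<forall>x\<in>X. c x < p) \<and> y = (\<Sum>x\<in>X. of_nat (c x) * x)}"

definition Fp_dim :: "nat \<Rightarrow> 'a::field set \<Rightarrow> nat" where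
  "Fp_dim p V = Max (card ` {B. B \<subseteq> V \<and> Fp_indep_set p B})"

text \<open>Z_s x Z_t represented as {0..<s} x {0..<t}; the element attached to (i,j) is beta^i gamma^j.\<close>
definition pat_elt :: "'a::field \<Rightarrow> 'a \<Rightarrow> nat \<times> nat \<Rightarrow> 'a" where
  "pat_elt \<beta> \<gamma> q = \<beta> ^ fst q * \<gamma> ^ snd q"

definition A_restr :: "'a::field \<Rightarrow> 'a \<Rightarrow> (nat \<times> nat) set \<Rightarrow> 'a set" where
  "A_restr \<beta> \<gamma> S = pat_elt \<beta> \<gamma> ` S"

definition lin_indep_pattern :: "nat \<Rightarrow> 'a::field \<Rightarrow> 'a \<Rightarrow> (nat \<times> nat) set \<Rightarrow> bool" where
  "lin_indep_pattern p \<beta> \<gamma> S \<longleftrightarrow> finite S \<and>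
     (\<forall>c :: nat \<times> nat \<Rightarrow> nat. (\<forall>q\<in>S. c q < p) \<longrightarrow>
        (\<Sum>q\<in>S. of_nat (c q) * pat_elt \<beta> \<gamma> q) = 0 \<longrightarrow> (\<forall>q\<in>S. c q = 0))"

definition tor_trans :: "nat \<Rightarrow> nat \<Rightarrow> nat \<Rightarrow> nat \<Rightarrow> nat \<times> nat \<Rightarrow> nat \<times> nat" where
  "tor_trans s t a b q = ((fst q + a) mod s, (snd q + b) mod t)"

end

theory Submission
  imports Defs "HOL-Library.FuncSet" "HOL-Number_Theory.Residues"
begin

(* Multiplication by l = beta^a gamma^b maps A|_S onto A|_(T_(a,b) S), since beta^s = gamma^t = 1,
   and as gcd(s,t) = 1 every nonzero l is of this form.  It therefore suffices to find l <> 0 such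
   that u + l w = 0 with u in V1, w in V2 forces u = w = 0: this gives both the disjointness of
   S1 and T_(a,b)(S2) and the independence of their union.  A bad l equals -u/w for nonzero
   u in V1, w in V2, so there are at most (|V1| - 1)(|V2| - 1) <= (p^dim V1 - 1)(p^dim V2 - 1)
   < p^n - 1 of them, as |V| <= p^dim V. *)

lemma of_nat_card_eq_0: "of_nat (card (UNIV :: 'a::ring_1 set)) = (0 :: 'a)"
  by (simp add: of_nat_eq_0_iff_char_dvd CHAR_dvd_CARD)

lemma power_card_minus_one_eq_one:
  fixes x :: "'a::{finite,field}"
  assumes "x \<noteq> 0"
  shows "x ^ (card (UNIV :: 'a set) - 1) = 1"
proof -
  let ?units = "UNIV - {0::'a}"
  have "(\<Prod>y\<in>?units. x * y) = (\<Prod>y\<in>?units. y)"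
    by (rule prod.reindex_bij_witness[of _ "\<lambda>y. y / x" "\<lambda>y. x * y"]) (auto simp: assms)
  moreover have "(\<Prod>y\<in>?units. x * y) = x ^ card ?units * (\<Prod>y\<in>?units. y)"
    by (simp add: prod.distrib)
  moreover have "(\<Prod>y\<in>?units. y) \<noteq> 0" by simp
  moreover have "card ?units = card (UNIV :: 'a set) - 1" by (simp add: card_Diff_singleton)
  ultimately show ?thesis by simp
qed

lemma power_mod_eq_power:
  fixes x :: "'a::monoid_mult"
  assumes "x ^ s = 1"
  shows "x ^ (k mod s) = x ^ k"
proof -
  have "x ^ k = x ^ (s * (k div s) + k mod s)" by simp
  also have "\<dots> = (x ^ s) ^ (k div s) * x ^ (k mod s)" by (simp only: power_add power_mult)
  finally show ?thesis using assms by simp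
qed

lemma power_minus_one_mult_less:
  fixes p i j n :: nat
  assumes "1 < p" "1 \<le> n" "i + j \<le> n"
  shows "(p ^ i - 1) * (p ^ j - 1) < p ^ n - 1"
proof (cases "i = 0 \<or> j = 0")
  case True
  then show ?thesis using assms one_less_power[of p n] by auto
next
  case False
  then have "2 \<le> p ^ i" "2 \<le> p ^ j"
    using assms(1) one_less_power[of p i] one_less_power[of p j] by simp_all
  then obtain x y where xy: "p ^ i = x + 2" "p ^ j = y + 2"
    by (metis le_add_diff_inverse2)
  have "(p ^ i - 1) * (p ^ j - 1) = (x + 1) * (y + 1)" using xy by simp
  also have "\<dots> < (x + 2) * (y + 2) - 1" by (simp add: algebra_simps)
  also have "\<dots> = p ^ (i + j) - 1" using xy by (simp add: power_add)
  also have "\<dots> \<le> p ^ n - 1" using assms by (intro diff_le_mono power_increasing) auto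
  finally show ?thesis .
qed

lemma zero_in_Fp_span: "0 < p \<Longrightarrow> 0 \<in> Fp_span p X"
  unfolding Fp_span_def by (intro CollectI exI[of _ "\<lambda>_. 0"]) simp

lemma sum_in_Fp_span:
  assumes "inj_on e S" "\<forall>q\<in>S. c q < p"
  shows "(\<Sum>q\<in>S. of_nat (c q) * e q) \<in> Fp_span p (e ` S)"
proof -
  let ?c = "c \<circ> the_inv_into S e"
  have "(\<Sum>x\<in>e ` S. of_nat (?c x) * x) = (\<Sum>q\<in>S. of_nat (c q) * e q)"
    using assms(1) by (simp add: sum.reindex the_inv_into_f_f)
  moreover have "\<forall>x\<in>e ` S. ?c x < p"
    using assms by (simp add: the_inv_into_f_f)
  ultimately show ?thesis
    unfolding Fp_span_def by (intro CollectI exI[of _ ?c]) simp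
qed

lemma scaled_in_Fp_span:
  assumes "finite X" "x \<in> X" "c < p"
  shows "of_nat c * x \<in> Fp_span p X"
proof -
  have "(\<Sum>y\<in>X. of_nat (if y = x then c else 0) * y) = (\<Sum>y\<in>X. if y = x then of_nat c * x else 0)"
    by (rule sum.cong) simp_all
  also have "\<dots> = of_nat c * x"
    using assms by simp
  finally show ?thesis
    using sum_in_Fp_span[of id X "\<lambda>y. if y = x then c else 0" p] assms by simp
qed

lemma card_Fp_span_le:
  assumes "finite X"
  shows "card (Fp_span p X) \<le> p ^ card X"
proof -
  let ?comb = "\<lambda>c. \<Sum>x\<in>X. of_nat (c x) * x"
  have "Fp_span p X \<subseteq> ?comb ` (X \<rightarrow>\<^sub>E {..<p})"
  proof
    fix y assume "y \<in> Fp_span p X"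
    then obtain c where "\<forall>x\<in>X. c x < p" "y = ?comb c"
      unfolding Fp_span_def by blast
    then show "y \<in> ?comb ` (X \<rightarrow>\<^sub>E {..<p})"
      by (intro image_eqI[of _ _ "restrict c X"]) (auto intro: sum.cong)
  qed
  then have "card (Fp_span p X) \<le> card (?comb ` (X \<rightarrow>\<^sub>E {..<p}))"
    using assms by (intro card_mono) (simp_all add: finite_PiE)
  also have "\<dots> \<le> card (X \<rightarrow>\<^sub>E {..<p})"
    using assms by (intro card_image_le) (simp add: finite_PiE)
  also have "\<dots> = p ^ card X"
    using assms by (simp add: card_PiE)
  finally show ?thesis .
qed

lemma card_le_Fp_dim:
  fixes X V :: "'a::{finite,field} set"
  assumes "Fp_indep_set p X" "X \<subseteq> V"
  shows "card X \<le> Fp_dim p V"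
  unfolding Fp_dim_def using assms by (intro Max_ge finite_imageI finite) auto

lemma card_Fp_span_le_power_Fp_dim:
  fixes X :: "'a::{finite,field} set"
  assumes "Fp_indep_set p X" "1 < p"
  shows "card (Fp_span p X) \<le> p ^ Fp_dim p (Fp_span p X)"
proof -
  have "finite X" using assms(1) by (simp add: Fp_indep_set_def)
  then have "X \<subseteq> Fp_span p X"
    using scaled_in_Fp_span[of X _ 1 p] assms(2) by auto
  then have "card X \<le> Fp_dim p (Fp_span p X)"
    using assms(1) by (rule card_le_Fp_dim[rotated])
  then have "p ^ card X \<le> p ^ Fp_dim p (Fp_span p X)"
    using assms(2) by (intro power_increasing) simp_all
  with card_Fp_span_le[OF \<open>finite X\<close>, of p] show ?thesis
    by (rule order_trans)
qed

lemma lin_indep_patternD: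
  assumes "lin_indep_pattern p \<beta> \<gamma> S" "\<forall>q\<in>S. c q < p"
    and "(\<Sum>q\<in>S. of_nat (c q) * pat_elt \<beta> \<gamma> q) = 0" "q \<in> S"
  shows "c q = 0"
  using assms unfolding lin_indep_pattern_def by blast

lemma lin_indep_pattern_nonzero:
  assumes "lin_indep_pattern p \<beta> \<gamma> S" "q \<in> S" "1 < p"
  shows "pat_elt \<beta> \<gamma> q \<noteq> 0"
proof
  assume zero: "pat_elt \<beta> \<gamma> q = 0"
  let ?c = "\<lambda>r. if r = q then 1 else 0 :: nat"
  have "(\<Sum>r\<in>S. of_nat (?c r) * pat_elt \<beta> \<gamma> r) = 0"
    using zero by (intro sum.neutral) simp
  then have "?c q = 0"
    using assms by (intro lin_indep_patternD[of p \<beta> \<gamma> S]) auto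
  then show False by simp
qed

lemma lin_indep_pattern_inj_on:
  fixes \<beta> \<gamma> :: "'a::field"
  assumes "lin_indep_pattern p \<beta> \<gamma> S" "of_nat p = (0::'a)" "1 < p"
  shows "inj_on (pat_elt \<beta> \<gamma>) S"
proof (rule inj_onI, rule ccontr)
  fix q q' assume q: "q \<in> S" "q' \<in> S" and eq: "pat_elt \<beta> \<gamma> q = pat_elt \<beta> \<gamma> q'" and "q \<noteq> q'"
  let ?c = "\<lambda>r. if r = q then 1 else if r = q' then p - 1 else 0"
  have "(\<Sum>r\<in>S. of_nat (?c r) * pat_elt \<beta> \<gamma> r)
      = (\<Sum>r\<in>S. (if r = q then pat_elt \<beta> \<gamma> q else 0)
                 + (if r = q' then of_nat (p - 1) * pat_elt \<beta> \<gamma> q' else 0))"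
    using \<open>q \<noteq> q'\<close> by (intro sum.cong) auto
  also have "\<dots> = of_nat (1 + (p - 1)) * pat_elt \<beta> \<gamma> q"
    using q eq assms(1) by (simp add: sum.distrib lin_indep_pattern_def algebra_simps)
  also have "\<dots> = 0" using assms(2,3) by simp
  finally have "?c q = 0"
    using assms(1,3) q by (intro lin_indep_patternD[of p \<beta> \<gamma> S]) auto
  then show False by simp
qed

lemma lin_indep_pattern_Fp_indep_set:
  assumes "lin_indep_pattern p \<beta> \<gamma> S" "inj_on (pat_elt \<beta> \<gamma>) S"
  shows "Fp_indep_set p (A_restr \<beta> \<gamma> S)"
  unfolding Fp_indep_set_def A_restr_def
proof (intro conjI allI impI)
  show "finite (pat_elt \<beta> \<gamma> ` S)"
    using assms(1) by (simp add: lin_indep_pattern_def)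
  fix c :: "'a \<Rightarrow> nat"
  assume "\<forall>x\<in>pat_elt \<beta> \<gamma> ` S. c x < p" "(\<Sum>x\<in>pat_elt \<beta> \<gamma> ` S. of_nat (c x) * x) = 0"
  then have "(c \<circ> pat_elt \<beta> \<gamma>) q = 0" if "q \<in> S" for q
    using assms that by (intro lin_indep_patternD[of p \<beta> \<gamma> S]) (simp_all add: sum.reindex)
  then show "\<forall>x\<in>pat_elt \<beta> \<gamma> ` S. c x = 0" by auto
qed

lemma card_nonzero_Fp_span_pattern_le:
  fixes \<beta> \<gamma> :: "'a::{finite,field}"
  assumes "lin_indep_pattern p \<beta> \<gamma> S" "of_nat p = (0::'a)" "1 < p"
  shows "card (Fp_span p (A_restr \<beta> \<gamma> S) - {0}) \<le> p ^ Fp_dim p (Fp_span p (A_restr \<beta> \<gamma> S)) - 1"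
proof -
  have "card (Fp_span p (A_restr \<beta> \<gamma> S)) \<le> p ^ Fp_dim p (Fp_span p (A_restr \<beta> \<gamma> S))"
    using assms lin_indep_pattern_inj_on[OF assms]
    by (intro card_Fp_span_le_power_Fp_dim lin_indep_pattern_Fp_indep_set)
  moreover have "0 \<in> Fp_span p (A_restr \<beta> \<gamma> S)"
    using assms(3) by (intro zero_in_Fp_span) simp
  ultimately show ?thesis by (simp add: card_Diff_singleton diff_le_mono)
qed

lemma pat_elt_tor_trans:
  assumes "\<beta> ^ s = 1" "\<gamma> ^ t = 1"
  shows "pat_elt \<beta> \<gamma> (tor_trans s t a b q) = pat_elt \<beta> \<gamma> (a, b) * pat_elt \<beta> \<gamma> q"
  unfolding pat_elt_def tor_trans_def
  using power_mod_eq_power[OF assms(1)] power_mod_eq_power[OF assms(2)]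
  by (simp add: power_add mult_ac)

lemma inj_on_tor_trans: "inj_on (tor_trans s t a b) ({0..<s} \<times> {0..<t})"
proof -
  have cancel: "i = i'" if "(i + a) mod m = (i' + a) mod m" "i < m" "i' < m" for i i' a m :: nat
    using that by (metis cong_add_rcancel_nat cong_def mod_less)
  show ?thesis
    by (auto simp: inj_on_def tor_trans_def dest: cancel)
qed

lemma power_eq_pat_elt:
  fixes g :: "'a::field"
  assumes "g ^ (s * t) = 1" "coprime s t" "0 < s" "0 < t"
  obtains a b where "a < s" "b < t" "g ^ k = pat_elt (g ^ t) (g ^ s) (a, b)"
proof -
  obtain x where x: "[t * x = 1] (mod s)"
    using cong_solve_coprime_nat[of t s] assms(2) by (auto simp: coprime_commute)
  obtain y where y: "[s * y = 1] (mod t)"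
    using cong_solve_coprime_nat[of s t] assms(2) by auto
  let ?m = "t * (x * k) + s * (y * k)"
  have "[t * x * k + s * (y * k) = 1 * k + 0] (mod s)"
    by (intro cong_add cong_scalar_right x) (simp add: cong_def)
  moreover have "[t * (x * k) + s * y * k = 0 + 1 * k] (mod t)"
    by (intro cong_add cong_scalar_right y) (simp add: cong_def)
  ultimately have "[?m = k] (mod s * t)"
    using assms(2) by (intro coprime_cong_mult_nat) (simp_all add: mult.assoc)
  then have "g ^ k = g ^ ?m"
    using power_mod_eq_power[OF assms(1)] by (metis cong_def)
  also have "\<dots> = (g ^ t) ^ (x * k) * (g ^ s) ^ (y * k)"
    by (simp add: power_add power_mult)
  also have "\<dots> = (g ^ t) ^ (x * k mod s) * (g ^ s) ^ (y * k mod t)"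
    using assms(1) power_mod_eq_power[of "g ^ t" s] power_mod_eq_power[of "g ^ s" t]
    by (simp add: power_mult[symmetric] mult.commute)
  finally show thesis
    using that[of "x * k mod s" "y * k mod t"] assms(3,4) by (simp add: pat_elt_def)
qed

lemma ex_multiplier_without_relation:
  fixes U W :: "'a::{finite,field} set"
  assumes "card (U - {0}) * card (W - {0}) < card (UNIV :: 'a set) - 1"
  obtains l where "l \<noteq> 0" "\<forall>u\<in>U. \<forall>w\<in>W. u + l * w = 0 \<longrightarrow> u = 0 \<and> w = 0"
proof -
  let ?bad = "(\<lambda>(u, w). - u / w) ` ((U - {0}) \<times> (W - {0}))"
  have "card ?bad \<le> card (U - {0}) * card (W - {0})"
    using card_image_le[of "(U - {0}) \<times> (W - {0})"] by (simp add: card_cartesian_product)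
  also have "\<dots> < card (UNIV - {0::'a})"
    using assms by (simp add: card_Diff_singleton)
  finally have "\<not> UNIV - {0::'a} \<subseteq> ?bad"
    using card_mono[of ?bad "UNIV - {0::'a}"] by auto
  then obtain l where l: "l \<noteq> 0" "l \<notin> ?bad" by blast
  have "u = 0 \<and> w = 0" if "u \<in> U" "w \<in> W" "u + l * w = 0" for u w
  proof (cases "w = 0")
    case False
    then have "u \<noteq> 0" "l = - u / w"
      using that(3) l(1) by (auto simp: field_simps add_eq_0_iff)
    then show ?thesis using l(2) that(1,2) False by force
  qed (use that in simp)
  then show thesis using that l(1) by blast
qed

lemma
  fixes \<beta> \<gamma> l :: "'a::field"
  assumes S1: "lin_indep_pattern p \<beta> \<gamma> S1" and S2: "lin_indep_pattern p \<beta> \<gamma> S2"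
    and char: "of_nat p = (0::'a)" and "1 < p"
    and \<tau>: "inj_on \<tau> S2" "\<forall>q\<in>S2. pat_elt \<beta> \<gamma> (\<tau> q) = l * pat_elt \<beta> \<gamma> q"
    and l: "\<forall>u\<in>Fp_span p (A_restr \<beta> \<gamma> S1). \<forall>w\<in>Fp_span p (A_restr \<beta> \<gamma> S2).
              u + l * w = 0 \<longrightarrow> u = 0 \<and> w = 0"
  shows disjoint_image_of_multiplier: "\<tau> ` S2 \<inter> S1 = {}"
    and lin_indep_pattern_Un_image: "lin_indep_pattern p \<beta> \<gamma> (S1 \<union> \<tau> ` S2)"
proof -
  let ?e = "pat_elt \<beta> \<gamma>"
  have fin: "finite S1" "finite S2"
    using S1 S2 by (simp_all add: lin_indep_pattern_def)
  show disj: "\<tau> ` S2 \<inter> S1 = {}"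
  proof (rule ccontr)
    assume "\<tau> ` S2 \<inter> S1 \<noteq> {}"
    then obtain q where q: "q \<in> S2" "\<tau> q \<in> S1" by blast
    let ?u = "of_nat 1 * ?e (\<tau> q)" and ?w = "of_nat (p - 1) * ?e q"
    have "?u \<in> Fp_span p (A_restr \<beta> \<gamma> S1)"
      using q fin \<open>1 < p\<close> by (intro scaled_in_Fp_span) (auto simp: A_restr_def)
    moreover have "?w \<in> Fp_span p (A_restr \<beta> \<gamma> S2)"
      using q fin \<open>1 < p\<close> by (intro scaled_in_Fp_span) (auto simp: A_restr_def)
    moreover have "of_nat (p - 1) = (-1 :: 'a)"
      using char \<open>1 < p\<close> by simp
    then have "?u + l * ?w = 0"
      using \<tau>(2) q(1) by simp
    ultimately have "?u = 0" using l by blast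
    then have "?e (\<tau> q) = 0" by simp
    then show False
      using lin_indep_pattern_nonzero[OF S1 q(2) \<open>1 < p\<close>] by contradiction
  qed
  show "lin_indep_pattern p \<beta> \<gamma> (S1 \<union> \<tau> ` S2)"
    unfolding lin_indep_pattern_def
  proof (intro conjI allI impI)
    show "finite (S1 \<union> \<tau> ` S2)" using fin by simp
    fix c :: "nat \<times> nat \<Rightarrow> nat"
    assume c: "\<forall>q\<in>S1 \<union> \<tau> ` S2. c q < p"
      and zero: "(\<Sum>q\<in>S1 \<union> \<tau> ` S2. of_nat (c q) * ?e q) = 0"
    let ?u = "\<Sum>q\<in>S1. of_nat (c q) * ?e q"
    let ?w = "\<Sum>q\<in>S2. of_nat (c (\<tau> q)) * ?e q"
    have "(\<Sum>q\<in>S1 \<union> \<tau> ` S2. of_nat (c q) * ?e q) = ?u + (\<Sum>q\<in>\<tau> ` S2. of_nat (c q) * ?e q)"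
      using fin disj by (intro sum.union_disjoint) auto
    also have "(\<Sum>q\<in>\<tau> ` S2. of_nat (c q) * ?e q) = l * ?w"
      using \<tau> by (simp add: sum.reindex sum_distrib_left mult_ac)
    finally have "?u + l * ?w = 0" using zero by simp
    moreover have "?u \<in> Fp_span p (A_restr \<beta> \<gamma> S1)"
      unfolding A_restr_def using c lin_indep_pattern_inj_on[OF S1 char \<open>1 < p\<close>]
      by (intro sum_in_Fp_span) auto
    moreover have "?w \<in> Fp_span p (A_restr \<beta> \<gamma> S2)"
      unfolding A_restr_def using c lin_indep_pattern_inj_on[OF S2 char \<open>1 < p\<close>]
      by (intro sum_in_Fp_span) auto
    ultimately have "?u = 0" "?w = 0" using l by blast+
    then have "c q = 0" if "q \<in> S1" for q
      using S1 c that by (intro lin_indep_patternD[of p \<beta> \<gamma> S1]) auto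
    moreover have "c (\<tau> q) = 0" if "q \<in> S2" for q
      using S2 c \<open>?w = 0\<close> that lin_indep_patternD[of p \<beta> \<gamma> S2 "c \<circ> \<tau>"] by auto
    ultimately show "\<forall>q\<in>S1 \<union> \<tau> ` S2. c q = 0" by auto
  qed
qed

theorem mainTheorem3:
  fixes p n s t :: nat and \<alpha> :: "'a::{finite,field}"
    and S1 S2 :: "(nat \<times> nat) set"
  assumes "prime p" and "n \<ge> 1" and "card (UNIV :: 'a set) = p ^ n"
    and "p ^ n - 1 = s * t" and "0 < s" and "s < t" and "coprime s t"
    and "\<alpha> \<noteq> 0" and "\<forall>x::'a. x \<noteq> 0 \<longrightarrow> (\<exists>k::nat. x = \<alpha> ^ k)"
    and "S1 \<subseteq> {0..<s} \<times> {0..<t}" and "S2 \<subseteq> {0..<s} \<times> {0..<t}"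
    and "S1 \<inter> S2 = {}"
    and "lin_indep_pattern p (\<alpha> ^ t) (\<alpha> ^ s) S1"
    and "lin_indep_pattern p (\<alpha> ^ t) (\<alpha> ^ s) S2"
    and "Fp_dim p (Fp_span p (A_restr (\<alpha> ^ t) (\<alpha> ^ s) S1))
         + Fp_dim p (Fp_span p (A_restr (\<alpha> ^ t) (\<alpha> ^ s) S2)) \<le> n"
  shows "\<exists>a<s. \<exists>b<t. tor_trans s t a b ` S2 \<inter> S1 = {} \<and>
           lin_indep_pattern p (\<alpha> ^ t) (\<alpha> ^ s) (S1 \<union> tor_trans s t a b ` S2)"
proof -
  let ?\<beta> = "\<alpha> ^ t" and ?\<gamma> = "\<alpha> ^ s"
  let ?V1 = "Fp_span p (A_restr ?\<beta> ?\<gamma> S1)" and ?V2 = "Fp_span p (A_restr ?\<beta> ?\<gamma> S2)"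
  have "1 < p" using assms(1) prime_gt_1_nat by blast
  have char: "of_nat p = (0::'a)"
    using of_nat_card_eq_0[where 'a='a] assms(2,3) by simp
  have "card (?V1 - {0}) * card (?V2 - {0}) \<le> (p ^ Fp_dim p ?V1 - 1) * (p ^ Fp_dim p ?V2 - 1)"
    using card_nonzero_Fp_span_pattern_le[OF assms(13) char \<open>1 < p\<close>]
      card_nonzero_Fp_span_pattern_le[OF assms(14) char \<open>1 < p\<close>]
    by (rule mult_le_mono)
  also have "\<dots> < card (UNIV :: 'a set) - 1"
    using power_minus_one_mult_less \<open>1 < p\<close> assms(2,3,15) by simp
  finally obtain l where l: "l \<noteq> 0" "\<forall>u\<in>?V1. \<forall>w\<in>?V2. u + l * w = 0 \<longrightarrow> u = 0 \<and> w = 0"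
    by (rule ex_multiplier_without_relation)
  obtain k where k: "l = \<alpha> ^ k" using assms(9) l(1) by blast
  have period: "\<alpha> ^ (s * t) = 1"
    using power_card_minus_one_eq_one[OF assms(8)] assms(3,4) by simp
  have "0 < t" using assms(5,6) by linarith
  obtain a b where ab: "a < s" "b < t" "\<alpha> ^ k = pat_elt ?\<beta> ?\<gamma> (a, b)"
    by (rule power_eq_pat_elt[OF period assms(7,5) \<open>0 < t\<close>])
  have orders: "?\<beta> ^ s = 1" "?\<gamma> ^ t = 1"
    using period by (simp_all add: power_mult[symmetric] mult.commute)
  have "\<forall>q\<in>S2. pat_elt ?\<beta> ?\<gamma> (tor_trans s t a b q) = l * pat_elt ?\<beta> ?\<gamma> q"
    using k ab(3) pat_elt_tor_trans[OF orders] by simp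
  moreover have "inj_on (tor_trans s t a b) S2"
    using inj_on_tor_trans assms(11) by (rule inj_on_subset)
  ultimately show ?thesis
    using ab(1,2) disjoint_image_of_multiplier[OF assms(13,14) char \<open>1 < p\<close> _ _ l(2)]
      lin_indep_pattern_Un_image[OF assms(13,14) char \<open>1 < p\<close> _ _ l(2)]
    by blast
qed

end
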